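(* Let $Y,\widetilde Y\in\mathbb{R}^{m\times N}$ with all columns $\widetilde Y_t$ nonzero, let $w\in\mathbb{R}^N$, $\delta>0$, and let $U_1,\dots,U_N$ be i.i.d. uniform random variables on $[0,1)$. Define the randomized rounding $\mathcal{Q}(z;U)=\delta\bigl(\lfloor z/\delta\rfloor+\mathbf 1\{U< z/\delta-\lfloor z/\delta\rfloor\}\bigr)$ (this is the stochastic quantizer onto $\{k\delta:k\in\mathbb Z\}$). (Basic SPFQ) Set $u_0=0\in\mathbb{R}^m$ and for $t=1,\dots,N$: $q_t=\mathcal{Q}\bigl(\langle \widetilde Y_t,u_{t-1}+w_tY_t\rangle/\|\widetilde Y_t\|_2^2;U_t\bigr)$, $u_t=u_{t-1}+w_tY_t-q_t\widetilde Y_t$. (Phase I) Set $\hat u_0=0$ and for $t=1,\dots,N$: $\widetilde w_t=\langle\widetilde Y_t,\hat u_{t-1}+w_tY_t\rangle/\|\widetilde Y_t\|_2^2$, $\hat u_t=\hat u_{t-1}+w_tY_t-\widetilde w_t\widetilde Y_t$. (Phase II) Set $\widetilde u_0=0$ and for $t=1,\dots,N$: $\widetilde q_t=\mathcal{Q}\bigl(\widetilde w_t+\langle\widetilde Y_t,\widetilde u_{t-1}\rangle/\|\widetilde Y_t\|_2^2;U_t\bigr)$, $\widetilde u_t=\widetilde u_{t-1}+(\widetilde w_t-\widetilde q_t)\widetilde Y_t$. Then $\widetilde q=q$ (for every realization of $U_1,\dots,U_N$); consequently $Yw-\widetilde Yq=\hat u_N+\widetilde u_N$.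
   Context: $\langle\cdot,\cdot\rangle$ is the Euclidean inner product on $\mathbb{R}^m$; $\widetilde Y_t$ denotes the $t$-th column of $\widetilde Y$, and similarly $Y_t$. *)

theory Defs
  imports "HOL-Analysis.Analysis"
begin

text \<open>Columns of Y and Ytil are indexed t = 1..N; columns live in real^'m.
  U is a realization of the random variables U_1..U_N.\<close>

definition Qround :: "real \<Rightarrow> real \<Rightarrow> real \<Rightarrow> real" where
  "Qround \<delta> z U = \<delta> * (of_int \<lfloor>z / \<delta>\<rfloor> +
      (if U < z / \<delta> - of_int \<lfloor>z / \<delta>\<rfloor> then 1 else 0))"

fun spfq_u :: "(nat \<Rightarrow> real^'m) \<Rightarrow> (nat \<Rightarrow> real^'m) \<Rightarrow> (nat \<Rightarrow> real) \<Rightarrow> real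
    \<Rightarrow> (nat \<Rightarrow> real) \<Rightarrow> nat \<Rightarrow> real^'m" where
  "spfq_u Y Yt w \<delta> U 0 = 0"
| "spfq_u Y Yt w \<delta> U (Suc t) =
     spfq_u Y Yt w \<delta> U t + w (Suc t) *\<^sub>R Y (Suc t)
     - Qround \<delta> ((Yt (Suc t) \<bullet> (spfq_u Y Yt w \<delta> U t + w (Suc t) *\<^sub>R Y (Suc t)))
                  / (norm (Yt (Suc t)))\<^sup>2) (U (Suc t)) *\<^sub>R Yt (Suc t)"

definition spfq_q :: "(nat \<Rightarrow> real^'m) \<Rightarrow> (nat \<Rightarrow> real^'m) \<Rightarrow> (nat \<Rightarrow> real) \<Rightarrow> real
    \<Rightarrow> (nat \<Rightarrow> real) \<Rightarrow> nat \<Rightarrow> real" where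
  "spfq_q Y Yt w \<delta> U t =
     Qround \<delta> ((Yt t \<bullet> (spfq_u Y Yt w \<delta> U (t - 1) + w t *\<^sub>R Y t)) / (norm (Yt t))\<^sup>2) (U t)"

fun phase1_u :: "(nat \<Rightarrow> real^'m) \<Rightarrow> (nat \<Rightarrow> real^'m) \<Rightarrow> (nat \<Rightarrow> real) \<Rightarrow> nat \<Rightarrow> real^'m" where
  "phase1_u Y Yt w 0 = 0"
| "phase1_u Y Yt w (Suc t) =
     phase1_u Y Yt w t + w (Suc t) *\<^sub>R Y (Suc t)
     - ((Yt (Suc t) \<bullet> (phase1_u Y Yt w t + w (Suc t) *\<^sub>R Y (Suc t)))
                  / (norm (Yt (Suc t)))\<^sup>2) *\<^sub>R Yt (Suc t)"

definition phase1_w :: "(nat \<Rightarrow> real^'m) \<Rightarrow> (nat \<Rightarrow> real^'m) \<Rightarrow> (nat \<Rightarrow> real) \<Rightarrow> nat \<Rightarrow> real" where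
  "phase1_w Y Yt w t = (Yt t \<bullet> (phase1_u Y Yt w (t - 1) + w t *\<^sub>R Y t)) / (norm (Yt t))\<^sup>2"

fun phase2_u :: "(nat \<Rightarrow> real^'m) \<Rightarrow> (nat \<Rightarrow> real^'m) \<Rightarrow> (nat \<Rightarrow> real) \<Rightarrow> real
    \<Rightarrow> (nat \<Rightarrow> real) \<Rightarrow> nat \<Rightarrow> real^'m" where
  "phase2_u Y Yt w \<delta> U 0 = 0"
| "phase2_u Y Yt w \<delta> U (Suc t) =
     phase2_u Y Yt w \<delta> U t
     + (phase1_w Y Yt w (Suc t)
        - Qround \<delta> (phase1_w Y Yt w (Suc t)
             + (Yt (Suc t) \<bullet> phase2_u Y Yt w \<delta> U t) / (norm (Yt (Suc t)))\<^sup>2) (U (Suc t)))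
       *\<^sub>R Yt (Suc t)"

definition phase2_q :: "(nat \<Rightarrow> real^'m) \<Rightarrow> (nat \<Rightarrow> real^'m) \<Rightarrow> (nat \<Rightarrow> real) \<Rightarrow> real
    \<Rightarrow> (nat \<Rightarrow> real) \<Rightarrow> nat \<Rightarrow> real" where
  "phase2_q Y Yt w \<delta> U t =
     Qround \<delta> (phase1_w Y Yt w t
        + (Yt t \<bullet> phase2_u Y Yt w \<delta> U (t - 1)) / (norm (Yt t))\<^sup>2) (U t)"

end

theory Submission
  imports Defs
begin

text \<open>The SPFQ state splits as \<open>u\<^sub>t = \<hat>u\<^sub>t + \<tilde>u\<^sub>t\<close>: by induction, since the inner product is linear,
  the argument fed to the quantizer by basic SPFQ at step \<open>t\<close> equals
  \<open>\<tilde>w\<^sub>t + \<langle>\<tilde>Y\<^sub>t, \<tilde>u\<^sub>t\<^sub>-\<^sub>1\<rangle>/\<parallel>\<tilde>Y\<^sub>t\<parallel>\<^sup>2\<close>, the argument used in phase II, so both draw the same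
  \<open>q\<^sub>t\<close> from \<open>U\<^sub>t\<close>. Unrolling the SPFQ recursion gives \<open>u\<^sub>N = Yw - \<tilde>Yq\<close>.\<close>

lemma inner_add_divide_split:
  fixes a x y v :: "'a::real_inner"
  shows "(a \<bullet> (x + y + v)) / c = (a \<bullet> (x + v)) / c + (a \<bullet> y) / c"
  by (simp add: inner_add_right add_divide_distrib)

lemma spfq_u_eq_phase1_u_plus_phase2_u:
  "spfq_u Y Yt w \<delta> U t = phase1_u Y Yt w t + phase2_u Y Yt w \<delta> U t"
proof (induction t)
  case 0
  then show ?case by simp
next
  case (Suc t)
  let ?v = "w (Suc t) *\<^sub>R Y (Suc t)" and ?c = "(norm (Yt (Suc t)))\<^sup>2"
  have same_argument:
    "(Yt (Suc t) \<bullet> (spfq_u Y Yt w \<delta> U t + ?v)) / ?c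
      = phase1_w Y Yt w (Suc t) + (Yt (Suc t) \<bullet> phase2_u Y Yt w \<delta> U t) / ?c"
    unfolding Suc.IH phase1_w_def by (simp add: inner_add_divide_split)
  show ?case
    unfolding spfq_u.simps phase1_u.simps phase2_u.simps same_argument
    by (simp add: Suc.IH phase1_w_def algebra_simps)
qed

lemma phase2_q_eq_spfq_q:
  assumes "t \<ge> 1"
  shows "phase2_q Y Yt w \<delta> U t = spfq_q Y Yt w \<delta> U t"
  unfolding phase2_q_def spfq_q_def phase1_w_def spfq_u_eq_phase1_u_plus_phase2_u
  by (simp add: inner_add_divide_split)

lemma spfq_u_eq_residual:
  "spfq_u Y Yt w \<delta> U N
    = (\<Sum>t=1..N. w t *\<^sub>R Y t) - (\<Sum>t=1..N. spfq_q Y Yt w \<delta> U t *\<^sub>R Yt t)"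
  by (induction N) (simp_all add: spfq_q_def algebra_simps)

theorem mainTheorem1:
  fixes Y Yt :: "nat \<Rightarrow> real^'m" and w U :: "nat \<Rightarrow> real" and \<delta> :: real and N :: nat
  assumes "\<delta> > 0"
    and "\<And>t. t \<in> {1..N} \<Longrightarrow> Yt t \<noteq> 0"
    and "\<And>t. t \<in> {1..N} \<Longrightarrow> 0 \<le> U t \<and> U t < 1"
  shows "(\<forall>t\<in>{1..N}. phase2_q Y Yt w \<delta> U t = spfq_q Y Yt w \<delta> U t)
    \<and> (\<Sum>t=1..N. w t *\<^sub>R Y t) - (\<Sum>t=1..N. spfq_q Y Yt w \<delta> U t *\<^sub>R Yt t)
        = phase1_u Y Yt w N + phase2_u Y Yt w \<delta> U N"
  using phase2_q_eq_spfq_q spfq_u_eq_residual[of Y Yt w \<delta> U N, symmetric]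
    spfq_u_eq_phase1_u_plus_phase2_u[of Y Yt w \<delta> U N]
  by auto

end
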